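(* Let $(X,U)$ be a measurable space, $\mu:U\to B_2$ a measure, and $U'$ the set of measurable functions $X\to B_2$. Consider the map $U'\to B_2$, $f\mapsto\int f\,d\mu=\mu(\mathrm{supp}\,f)$. Then: (a) this map is linear (over $B_2$), i.e. $\int(f\oplus g)\,d\mu=\int f\,d\mu\oplus\int g\,d\mu$ and $\int (c\cdot f)\,d\mu=c\cdot\int f\,d\mu$ for $f,g\in U'$, $c\in B_2$; (b) if $f_n,f\in U'$ ($n\in\mathbb N$) and $f_n$ converges monotonously to $f$, then the binary sequence $\int f_n\,d\mu$ converges to $\int f\,d\mu$; (c) for $f,g\in U'$: $f=g$ almost everywhere if and only if $\int f\,d\mu=\int g\,d\mu$.
   Context: $B_2=\{0,1\}$, $\oplus$ addition modulo 2; functions $X\to B_2$ are added and multiplied by scalars pointwise. A measurable space $(X,U)$: $U\subset2^X$ non-empty, closed under $\Delta$ and $\cap$. $f:X\to B_2$ is measurable if $\mathrm{supp}\,f=\{x:f(x)=1\}\in U$. $\mu:U\to B_2$ is a measure if for every sequence of pairwise disjoint sets of $U$ whose union is in $U$, only finitely many have $\mu$-value 1 and $\mu$ of the union is their number modulo 2. $f_n$ converges monotonously to $f$ if either $\mathrm{supp}\,f_0\subset\mathrm{supp}\,f_1\subset\cdots$ with $\bigcup_n\mathrm{supp}\,f_n=\mathrm{supp}\,f$, or $\mathrm{supp}\,f_0\supset\mathrm{supp}\,f_1\supset\cdots$ with $\bigcap_n\mathrm{supp}\,f_n=\mathrm{supp}\,f$. A binary sequence $(x_n)$ converges to $x_0$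 if $x_n=x_0$ for all sufficiently large $n$. $f=g$ almost everywhere means $\mu(\{x:f(x)\neq g(x)\})=0$. *)

theory Defs
  imports Main "HOL-Library.Z2"
begin

text \<open>B_2 is rendered as the two-element field bit (addition = xor).
  The space X is the universe of the type 'a.\<close>

definition b2_supp :: "('a \<Rightarrow> bit) \<Rightarrow> 'a set" where
  "b2_supp f = {x. f x = 1}"

definition b2_measurable_space :: "'a set set \<Rightarrow> bool" where
  "b2_measurable_space U \<longleftrightarrow> U \<noteq> {} \<and>
     (\<forall>A\<in>U. \<forall>B\<in>U. (A - B) \<union> (B - A) \<in> U) \<and>
     (\<forall>A\<in>U. \<forall>B\<in>U. A \<inter> B \<in> U)"

definition b2_measurable :: "'a set set \<Rightarrow> ('a \<Rightarrow> bit) \<Rightarrow> bool" where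
  "b2_measurable U f \<longleftrightarrow> b2_supp f \<in> U"

definition b2_measure :: "'a set set \<Rightarrow> ('a set \<Rightarrow> bit) \<Rightarrow> bool" where
  "b2_measure U \<mu> \<longleftrightarrow>
     (\<forall>A :: nat \<Rightarrow> 'a set. (\<forall>n. A n \<in> U) \<longrightarrow> (\<forall>m n. m \<noteq> n \<longrightarrow> A m \<inter> A n = {}) \<longrightarrow> (\<Union>n. A n) \<in> U \<longrightarrow>
        finite {n. \<mu> (A n) = 1} \<and> \<mu> (\<Union>n. A n) = of_nat (card {n. \<mu> (A n) = 1}))"

definition b2_integral :: "('a set \<Rightarrow> bit) \<Rightarrow> ('a \<Rightarrow> bit) \<Rightarrow> bit" where
  "b2_integral \<mu> f = \<mu> (b2_supp f)"

definition b2_mono_conv :: "(nat \<Rightarrow> 'a \<Rightarrow> bit) \<Rightarrow> ('a \<Rightarrow> bit) \<Rightarrow> bool" where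
  "b2_mono_conv fs f \<longleftrightarrow>
     ((\<forall>n. b2_supp (fs n) \<subseteq> b2_supp (fs (Suc n))) \<and> (\<Union>n. b2_supp (fs n)) = b2_supp f) \<or>
     ((\<forall>n. b2_supp (fs (Suc n)) \<subseteq> b2_supp (fs n)) \<and> (\<Inter>n. b2_supp (fs n)) = b2_supp f)"

definition b2_seq_conv :: "(nat \<Rightarrow> bit) \<Rightarrow> bit \<Rightarrow> bool" where
  "b2_seq_conv xs x0 \<longleftrightarrow> (\<exists>N. \<forall>n\<ge>N. xs n = x0)"

definition b2_ae_eq :: "('a set \<Rightarrow> bit) \<Rightarrow> ('a \<Rightarrow> bit) \<Rightarrow> ('a \<Rightarrow> bit) \<Rightarrow> bool" where
  "b2_ae_eq \<mu> f g \<longleftrightarrow> \<mu> {x. f x \<noteq> g x} = 0"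

end

theory Submission
  imports Defs "HOL-Library.Disjoint_Sets" "HOL-Library.Infinite_Set"
begin

text \<open>Since \<open>U\<close> is closed under symmetric difference and \<open>B\<^sub>2\<close> has characteristic 2, additivity of
  \<open>\<mu>\<close> turns into \<open>\<mu> (A \<triangle> B) = \<mu> A + \<mu> B\<close>; as \<open>supp (f + g) = supp f \<triangle> supp g\<close> this is
  linearity of the integral, and \<open>f = g\<close> a.e. says exactly that \<open>\<integral>(f + g) = 0\<close>.
  For monotone convergence, cut an increasing sequence into its disjoint differences: only finitely
  many of them have measure 1, so \<open>\<mu> (A n)\<close>, the parity of the number of such pieces up to \<open>n\<close>,
  is eventually the parity of their total number, which is \<open>\<mu>\<close> of the union. Decreasing sequences reduce to
  increasing ones by complementation in the first set.\<close>

declare add_bit_eq_xor [simp del] mult_bit_eq_and [simp del]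

lemma bit_add_self [simp]: "(b::bit) + b = 0"
  by (simp add: add_bit_eq_xor)

lemma of_nat_card_two_bits:
  "(of_nat (card {n::nat. n = 0 \<and> a = 1 \<or> n = 1 \<and> b = 1}) :: bit) = a + b"
  by (cases a; cases b) (simp_all add: Collect_disj_eq)

lemma bit_add_eq_1_iff: "(a::bit) + b = 1 \<longleftrightarrow> a \<noteq> b"
  by (cases a; cases b) simp_all

lemma b2_supp_add: "b2_supp (\<lambda>x. f x + g x) = (b2_supp f - b2_supp g) \<union> (b2_supp g - b2_supp f)"
  by (auto simp: b2_supp_def bit_add_eq_1_iff)

lemma b2_supp_add_eq_neq: "b2_supp (\<lambda>x. f x + g x) = {x. f x \<noteq> g x}"
  by (simp add: b2_supp_def bit_add_eq_1_iff)

lemma b2_supp_scale: "b2_supp (\<lambda>x. c * f x) = (if c = 0 then {} else b2_supp f)"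
  by (cases c) (simp_all add: b2_supp_def)

locale b2_measure_space =
  fixes U :: "'a set set" and \<mu> :: "'a set \<Rightarrow> bit"
  assumes measurable_space: "b2_measurable_space U" and measure: "b2_measure U \<mu>"
begin

lemma sym_diff_closed: "A \<in> U \<Longrightarrow> B \<in> U \<Longrightarrow> (A - B) \<union> (B - A) \<in> U"
  using measurable_space unfolding b2_measurable_space_def by blast

lemma Int_closed: "A \<in> U \<Longrightarrow> B \<in> U \<Longrightarrow> A \<inter> B \<in> U"
  using measurable_space unfolding b2_measurable_space_def by blast

lemma empty_closed: "{} \<in> U"
proof -
  obtain A where "A \<in> U"
    using measurable_space unfolding b2_measurable_space_def by blast
  with sym_diff_closed[of A A] show ?thesis by simp
qed

lemma Diff_closed:
  assumes "A \<in> U" "B \<in> U" shows "A - B \<in> U"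
proof -
  have "A - B = (A - A \<inter> B) \<union> (A \<inter> B - A)" by blast
  with sym_diff_closed[OF assms(1) Int_closed[OF assms]] show ?thesis by simp
qed

lemma measure_UN_disjoint_family:
  fixes A :: "nat \<Rightarrow> 'a set"
  assumes "\<And>n. A n \<in> U" "disjoint_family A" "(\<Union>n. A n) \<in> U"
  shows "finite {n. \<mu> (A n) = 1}" and "\<mu> (\<Union>n. A n) = of_nat (card {n. \<mu> (A n) = 1})"
proof -
  have "\<forall>m n. m \<noteq> n \<longrightarrow> A m \<inter> A n = {}"
    using assms(2) by (simp add: disjoint_family_on_def)
  then show "finite {n. \<mu> (A n) = 1}" and "\<mu> (\<Union>n. A n) = of_nat (card {n. \<mu> (A n) = 1})"
    using measure[unfolded b2_measure_def, rule_format, of A] assms(1,3) by blast+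
qed

lemma measure_empty [simp]: "\<mu> {} = 0"
  using measure_UN_disjoint_family(1)[of "\<lambda>_. {}"] empty_closed
  by (cases "\<mu> {} = 1") (auto simp: disjoint_family_on_def)

lemma measure_disjoint_Un:
  assumes "A \<in> U" "B \<in> U" "A \<inter> B = {}" "A \<union> B \<in> U"
  shows "\<mu> (A \<union> B) = \<mu> A + \<mu> B"
proof -
  define C where "C n = (if n = 0 then A else if n = 1 then B else {})" for n :: nat
  have C_closed: "C n \<in> U" for n
    using assms(1,2) empty_closed by (simp add: C_def)
  have "disjoint_family C"
    using assms(3) by (auto simp: disjoint_family_on_def C_def)
  moreover have "(\<Union>n. C n) = A \<union> B"
    by (auto simp: C_def split: if_splits)
  moreover have "{n. \<mu> (C n) = 1} = {n. n = 0 \<and> \<mu> A = 1 \<or> n = 1 \<and> \<mu> B = 1}"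
    by (auto simp: C_def)
  ultimately show ?thesis
    using measure_UN_disjoint_family(2)[of C, OF C_closed] assms(4)
    by (simp only: of_nat_card_two_bits)
qed

lemma measure_Diff:
  assumes "A \<in> U" "B \<in> U" "B \<subseteq> A"
  shows "\<mu> (A - B) = \<mu> A + \<mu> B"
proof -
  have "\<mu> A = \<mu> ((A - B) \<union> B)"
    using assms(3) by (simp add: Un_absorb2)
  also have "\<dots> = \<mu> (A - B) + \<mu> B"
    using assms by (intro measure_disjoint_Un Diff_closed) (auto simp: Un_absorb2)
  finally show ?thesis
    by (simp add: add.assoc)
qed

lemma measure_sym_diff:
  assumes "A \<in> U" "B \<in> U"
  shows "\<mu> ((A - B) \<union> (B - A)) = \<mu> A + \<mu> B"
proof -
  have "\<mu> (A - B) = \<mu> A + \<mu> (A \<inter> B)"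
    using measure_Diff[of A "A \<inter> B"] assms Int_closed by (simp add: Diff_Int)
  moreover have "\<mu> (B - A) = \<mu> B + \<mu> (A \<inter> B)"
    using measure_Diff[of B "A \<inter> B"] assms Int_closed by (simp add: Diff_Int)
  moreover have "\<mu> ((A - B) \<union> (B - A)) = \<mu> (A - B) + \<mu> (B - A)"
    using assms by (intro measure_disjoint_Un Diff_closed sym_diff_closed) auto
  ultimately show ?thesis
    by (simp add: algebra_simps)
qed

lemma measure_mono_eventually_eq_UN:
  fixes A :: "nat \<Rightarrow> 'a set"
  assumes "\<And>n. A n \<in> U" "mono A" "(\<Union>n. A n) \<in> U"
  shows "\<exists>N. \<forall>n\<ge>N. \<mu> (A n) = \<mu> (\<Union>n. A n)"
proof -
  let ?D = "disjointed A"
  have D_closed: "?D n \<in> U" for n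
    using assms(1) by (cases n) (simp_all add: disjointed_mono[OF assms(2)] Diff_closed)
  note count_D = measure_UN_disjoint_family[of ?D, OF D_closed disjoint_family_disjointed,
      unfolded UN_disjointed_eq, OF assms(3)]
  obtain N where N: "{k. \<mu> (?D k) = 1} \<subseteq> {..<N}"
    using count_D(1) finite_nat_iff_bounded by blast
  have "\<mu> (A n) = \<mu> (\<Union>n. A n)" if "N \<le> n" for n
  proof -
    \<comment> \<open>\<open>A n\<close> is the union of the first \<open>n + 1\<close> pieces, padded with empty sets\<close>
    define E where "E k = (if k \<le> n then ?D k else {})" for k
    have "(\<Union>k. E k) = (\<Union>k\<in>{0..<Suc n}. ?D k)"
      by (auto simp: E_def atLeast0LessThan less_Suc_eq_le split: if_splits)
    also have "\<dots> = (\<Union>k\<le>n. A k)"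
      unfolding finite_UN_disjointed_eq by (simp only: atLeast0LessThan lessThan_Suc_atMost)
    also have "\<dots> = A n"
      using assms(2) by (rule mono_imp_UN_eq_last)
    finally have UN_E: "(\<Union>k. E k) = A n" .
    have "disjoint_family E"
      using disjoint_family_disjointed[of A] by (auto simp: disjoint_family_on_def E_def)
    then have "\<mu> (A n) = of_nat (card {k. \<mu> (E k) = 1})"
      using measure_UN_disjoint_family(2)[of E] UN_E assms(1) D_closed empty_closed
      by (simp add: E_def)
    also have "{k. \<mu> (E k) = 1} = {k. \<mu> (?D k) = 1}"
      using N that by (auto simp: E_def)
    finally show ?thesis
      using count_D(2) by simp
  qed
  then show ?thesis by blast
qed

lemma measure_antimono_eventually_eq_INT:
  fixes A :: "nat \<Rightarrow> 'a set"
  assumes "\<And>n. A n \<in> U" "antimono A" "(\<Inter>n. A n) \<in> U"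
  shows "\<exists>N. \<forall>n\<ge>N. \<mu> (A n) = \<mu> (\<Inter>n. A n)"
proof -
  have A_le: "A n \<subseteq> A 0" for n
    using assms(2) by (simp add: antimono_def)
  have "mono (\<lambda>n. A 0 - A n)"
    using assms(2) by (auto simp: mono_def antimono_def)
  moreover have "(\<Union>n. A 0 - A n) = A 0 - (\<Inter>n. A n)"
    by blast
  ultimately obtain N where N: "\<forall>n\<ge>N. \<mu> (A 0 - A n) = \<mu> (A 0 - (\<Inter>n. A n))"
    using measure_mono_eventually_eq_UN[of "\<lambda>n. A 0 - A n"] assms(1,3) Diff_closed by auto
  have "\<mu> (A 0) + \<mu> (A n) = \<mu> (A 0) + \<mu> (\<Inter>n. A n)" if "N \<le> n" for n
    using N that measure_Diff[of "A 0" "A n"] measure_Diff[of "A 0" "\<Inter>n. A n"] A_le assms(1,3)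
    by (metis INT_lower UNIV_I order_trans)
  then show ?thesis
    by (metis add_left_cancel)
qed

lemma b2_integral_add:
  assumes "b2_measurable U f" "b2_measurable U g"
  shows "b2_integral \<mu> (\<lambda>x. f x + g x) = b2_integral \<mu> f + b2_integral \<mu> g"
  using assms measure_sym_diff
  by (simp add: b2_integral_def b2_measurable_def b2_supp_add)

lemma b2_integral_scale: "b2_integral \<mu> (\<lambda>x. c * f x) = c * b2_integral \<mu> f"
  unfolding b2_integral_def b2_supp_scale by (cases c) simp_all

lemma b2_integral_mono_conv:
  assumes "\<And>n. b2_measurable U (fs n)" "b2_measurable U f" "b2_mono_conv fs f"
  shows "b2_seq_conv (\<lambda>n. b2_integral \<mu> (fs n)) (b2_integral \<mu> f)"
proof -
  let ?S = "\<lambda>n. b2_supp (fs n)"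
  have closed: "?S n \<in> U" "b2_supp f \<in> U" for n
    using assms(1,2) by (simp_all add: b2_measurable_def)
  from assms(3) consider "mono ?S" "(\<Union>n. ?S n) = b2_supp f" | "antimono ?S" "(\<Inter>n. ?S n) = b2_supp f"
    unfolding b2_mono_conv_def mono_iff_le_Suc antimono_iff_le_Suc by blast
  then have "\<exists>N. \<forall>n\<ge>N. \<mu> (?S n) = \<mu> (b2_supp f)"
    by cases (use closed measure_mono_eventually_eq_UN measure_antimono_eventually_eq_INT in metis)+
  then show ?thesis
    by (simp add: b2_seq_conv_def b2_integral_def)
qed

lemma b2_ae_eq_iff_integral_eq:
  assumes "b2_measurable U f" "b2_measurable U g"
  shows "b2_ae_eq \<mu> f g \<longleftrightarrow> b2_integral \<mu> f = b2_integral \<mu> g"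
proof -
  have "b2_ae_eq \<mu> f g \<longleftrightarrow> b2_integral \<mu> (\<lambda>x. f x + g x) = 0"
    by (simp add: b2_ae_eq_def b2_integral_def b2_supp_add_eq_neq)
  also have "\<dots> \<longleftrightarrow> b2_integral \<mu> f = b2_integral \<mu> g"
    using assms by (cases "b2_integral \<mu> f"; cases "b2_integral \<mu> g") (simp_all add: b2_integral_add)
  finally show ?thesis .
qed

end

theorem proposition7p9:
  fixes U :: "'a set set" and \<mu> :: "'a set \<Rightarrow> bit"
  assumes "b2_measurable_space U" and "b2_measure U \<mu>"
  shows "(\<forall>f g. b2_measurable U f \<longrightarrow> b2_measurable U g \<longrightarrow>
            b2_integral \<mu> (\<lambda>x. f x + g x) = b2_integral \<mu> f + b2_integral \<mu> g)
       \<and> (\<forall>f c. b2_measurable U f \<longrightarrow>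
            b2_integral \<mu> (\<lambda>x. c * f x) = c * b2_integral \<mu> f)
       \<and> (\<forall>fs f. (\<forall>n. b2_measurable U (fs n)) \<longrightarrow> b2_measurable U f \<longrightarrow> b2_mono_conv fs f \<longrightarrow>
            b2_seq_conv (\<lambda>n. b2_integral \<mu> (fs n)) (b2_integral \<mu> f))
       \<and> (\<forall>f g. b2_measurable U f \<longrightarrow> b2_measurable U g \<longrightarrow>
            (b2_ae_eq \<mu> f g \<longleftrightarrow> b2_integral \<mu> f = b2_integral \<mu> g))"
proof -
  interpret b2_measure_space U \<mu>
    using assms by unfold_locales
  show ?thesis
    using b2_integral_add b2_integral_scale b2_integral_mono_conv b2_ae_eq_iff_integral_eq by blast
qed

end
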